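(* Let $G$ be a graphical regular representation of a finitely generated group. Then every periodic vertex-coloring, edge-coloring or orientation of $G$ is strongly periodic.
   Context: For a group $\Gamma$ with finite generating set $S$ not containing the identity, $\mathrm{Cay}(\Gamma,S)$ has vertex set $\Gamma$, with $g,h$ adjacent iff $hg^{-1}\in S\cup S^{-1}$; it is a graphical regular representation of $\Gamma$ if its automorphism group consists exactly of the right multiplications by elements of $\Gamma$. A coloring or orientation is periodic if the subgroup of automorphisms preserving it has finitely many orbits on $V(G)$, and strongly periodic if this subgroup has finite index in $\mathrm{Aut}(G)$. *)

theory Defs
  imports "HOL-Algebra.Algebra"
begin

definition cayley_adj :: "('a, 'b) monoid_scheme \<Rightarrow> 'a set \<Rightarrow> 'a \<Rightarrow> 'a \<Rightarrow> bool" where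
  "cayley_adj G S g h \<longleftrightarrow> h \<otimes>\<^bsub>G\<^esub> inv\<^bsub>G\<^esub> g \<in> S \<union> (\<lambda>s. inv\<^bsub>G\<^esub> s) ` S"

definition graph_aut :: "'a set \<Rightarrow> ('a \<Rightarrow> 'a \<Rightarrow> bool) \<Rightarrow> ('a \<Rightarrow> 'a) set" where
  "graph_aut V E = {f \<in> Bij V. \<forall>u\<in>V. \<forall>v\<in>V. E u v \<longleftrightarrow> E (f u) (f v)}"

definition aut_group :: "'a set \<Rightarrow> ('a \<Rightarrow> 'a \<Rightarrow> bool) \<Rightarrow> ('a \<Rightarrow> 'a) monoid" where
  "aut_group V E = (BijGroup V)\<lparr>carrier := graph_aut V E\<rparr>"

definition is_GRR :: "('a, 'b) monoid_scheme \<Rightarrow> 'a set \<Rightarrow> bool" where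
  "is_GRR G S \<longleftrightarrow>
     graph_aut (carrier G) (cayley_adj G S) =
       {restrict (\<lambda>x. x \<otimes>\<^bsub>G\<^esub> g) (carrier G) | g. g \<in> carrier G}"

definition vcol_stab :: "'a set \<Rightarrow> ('a \<Rightarrow> 'a \<Rightarrow> bool) \<Rightarrow> ('a \<Rightarrow> 'c) \<Rightarrow> ('a \<Rightarrow> 'a) set" where
  "vcol_stab V E c = {f \<in> graph_aut V E. \<forall>v\<in>V. c (f v) = c v}"

definition ecol_stab :: "'a set \<Rightarrow> ('a \<Rightarrow> 'a \<Rightarrow> bool) \<Rightarrow> ('a set \<Rightarrow> 'c) \<Rightarrow> ('a \<Rightarrow> 'a) set" where
  "ecol_stab V E c = {f \<in> graph_aut V E. \<forall>u\<in>V. \<forall>v\<in>V. E u v \<longrightarrow> c {f u, f v} = c {u, v}}"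

definition is_orientation :: "'a set \<Rightarrow> ('a \<Rightarrow> 'a \<Rightarrow> bool) \<Rightarrow> ('a \<times> 'a) set \<Rightarrow> bool" where
  "is_orientation V E Or \<longleftrightarrow> Or \<subseteq> V \<times> V \<and> (\<forall>(u, v)\<in>Or. E u v) \<and>
     (\<forall>u\<in>V. \<forall>v\<in>V. E u v \<longrightarrow> ((u, v) \<in> Or \<longleftrightarrow> (v, u) \<notin> Or))"

definition orient_stab :: "'a set \<Rightarrow> ('a \<Rightarrow> 'a \<Rightarrow> bool) \<Rightarrow> ('a \<times> 'a) set \<Rightarrow> ('a \<Rightarrow> 'a) set" where
  "orient_stab V E Or = {f \<in> graph_aut V E. \<forall>(u, v)\<in>Or. (f u, f v) \<in> Or}"

definition periodic :: "'a set \<Rightarrow> ('a \<Rightarrow> 'a) set \<Rightarrow> bool" where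
  "periodic V H \<longleftrightarrow> finite ((\<lambda>v. (\<lambda>f. f v) ` H) ` V)"

definition strongly_periodic :: "'a set \<Rightarrow> ('a \<Rightarrow> 'a \<Rightarrow> bool) \<Rightarrow> ('a \<Rightarrow> 'a) set \<Rightarrow> bool" where
  "strongly_periodic V E H \<longleftrightarrow> finite (rcosets\<^bsub>aut_group V E\<^esub> H)"

end

theory Submission
  imports Defs
begin

text \<open>
  In a graphical regular representation the automorphism group acts regularly on the
  vertices, so an automorphism is determined by its value at a single vertex \<open>v\<^sub>0\<close>.
  Hence the right coset \<open>H a\<close> is determined by the \<open>H\<close>-orbit \<open>{h (a v\<^sub>0) | h \<in> H}\<close>,
  and finitely many orbits give finitely many cosets. Only this (semi)regularity is used:
  neither finiteness nor generation by \<open>S\<close>, nor that the stabilisers are subgroups.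
\<close>

lemma graph_aut_compose:
  assumes h: "h \<in> graph_aut V E" and a: "a \<in> graph_aut V E"
  shows "compose V h a \<in> graph_aut V E"
proof -
  have "a u \<in> V" if "u \<in> V" for u
    using a that by (auto simp: graph_aut_def Bij_def bij_betw_def)
  then have "E u v \<longleftrightarrow> E (compose V h a u) (compose V h a v)" if "u \<in> V" "v \<in> V" for u v
    using h a that by (simp add: graph_aut_def compose_def)
  moreover have "compose V h a \<in> Bij V"
    using h a by (simp add: graph_aut_def compose_Bij)
  ultimately show ?thesis by (simp add: graph_aut_def)
qed

lemma r_coset_aut_group:
  assumes "H \<subseteq> graph_aut V E" and "a \<in> graph_aut V E"
  shows "H #>\<^bsub>aut_group V E\<^esub> a = (\<lambda>h. compose V h a) ` H"
proof -
  have "h \<otimes>\<^bsub>aut_group V E\<^esub> a = compose V h a" if "h \<in> H" for h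
    using assms that by (auto simp: aut_group_def BijGroup_def graph_aut_def)
  then show ?thesis by (auto simp: r_coset_def)
qed

lemma rcosets_aut_group_subset:
  assumes "H \<subseteq> graph_aut V E"
  shows "rcosets\<^bsub>aut_group V E\<^esub> H \<subseteq> Pow (graph_aut V E)"
proof
  fix C assume "C \<in> rcosets\<^bsub>aut_group V E\<^esub> H"
  then obtain a where "a \<in> graph_aut V E" "C = H #>\<^bsub>aut_group V E\<^esub> a"
    by (auto simp: RCOSETS_def aut_group_def)
  then show "C \<in> Pow (graph_aut V E)"
    using assms by (auto simp: r_coset_aut_group intro: graph_aut_compose)
qed

lemma periodic_imp_strongly_periodic_semiregular:
  assumes H: "H \<subseteq> graph_aut V E"
    and v\<^sub>0: "v\<^sub>0 \<in> V"
    and semiregular: "inj_on (\<lambda>f. f v\<^sub>0) (graph_aut V E)"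
    and "periodic V H"
  shows "strongly_periodic V E H"
proof -
  let ?cosets = "rcosets\<^bsub>aut_group V E\<^esub> H"
  let ?orbits = "(\<lambda>v. (\<lambda>f. f v) ` H) ` V"
  let ?eval = "image (\<lambda>f. f v\<^sub>0)"
  have "?eval (H #>\<^bsub>aut_group V E\<^esub> a) = (\<lambda>h. h (a v\<^sub>0)) ` H" if "a \<in> graph_aut V E" for a
    using that H v\<^sub>0 by (simp add: r_coset_aut_group image_image compose_def)
  moreover have "a v\<^sub>0 \<in> V" if "a \<in> graph_aut V E" for a
    using that v\<^sub>0 by (auto simp: graph_aut_def Bij_def bij_betw_def)
  ultimately have "?eval ` ?cosets \<subseteq> ?orbits"
    by (auto simp: RCOSETS_def aut_group_def)
  then have "finite (?eval ` ?cosets)"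
    using \<open>periodic V H\<close> finite_subset unfolding periodic_def by blast
  moreover have "inj_on ?eval ?cosets"
    using inj_on_image_Pow[OF semiregular] rcosets_aut_group_subset[OF H] by (rule inj_on_subset)
  ultimately show ?thesis
    unfolding strongly_periodic_def by (rule finite_imageD)
qed

lemma is_GRR_inj_on_eval_one:
  assumes "monoid G" and "is_GRR G S"
  shows "inj_on (\<lambda>f. f \<one>\<^bsub>G\<^esub>) (graph_aut (carrier G) (cayley_adj G S))"
proof -
  have "restrict (\<lambda>x. x \<otimes>\<^bsub>G\<^esub> g) (carrier G) \<one>\<^bsub>G\<^esub> = g" if "g \<in> carrier G" for g
    using that assms(1) by (simp add: monoid.l_one monoid.one_closed)
  then show ?thesis
    using assms(2) unfolding is_GRR_def by (auto intro: inj_onI)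
qed

theorem corollary2p6:
  fixes G :: "('a, 'b) monoid_scheme" and S :: "'a set"
  assumes "group G"
    and "S \<subseteq> carrier G" and "finite S" and "\<one>\<^bsub>G\<^esub> \<notin> S"
    and "generate G S = carrier G"
    and "is_GRR G S"
  shows "(\<forall>c :: 'a \<Rightarrow> 'c.
            periodic (carrier G) (vcol_stab (carrier G) (cayley_adj G S) c) \<longrightarrow>
            strongly_periodic (carrier G) (cayley_adj G S) (vcol_stab (carrier G) (cayley_adj G S) c))
       \<and> (\<forall>c :: 'a set \<Rightarrow> 'd.
            periodic (carrier G) (ecol_stab (carrier G) (cayley_adj G S) c) \<longrightarrow>
            strongly_periodic (carrier G) (cayley_adj G S) (ecol_stab (carrier G) (cayley_adj G S) c))
       \<and> (\<forall>Or. is_orientation (carrier G) (cayley_adj G S) Or \<longrightarrow>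
            periodic (carrier G) (orient_stab (carrier G) (cayley_adj G S) Or) \<longrightarrow>
            strongly_periodic (carrier G) (cayley_adj G S) (orient_stab (carrier G) (cayley_adj G S) Or))"
proof -
  have monoid: "monoid G" using \<open>group G\<close> by (rule group.axioms(1))
  have "strongly_periodic (carrier G) (cayley_adj G S) H"
    if "H \<subseteq> graph_aut (carrier G) (cayley_adj G S)" and "periodic (carrier G) H" for H
    using that(1) monoid.one_closed[OF monoid]
      is_GRR_inj_on_eval_one[OF monoid \<open>is_GRR G S\<close>] that(2)
    by (rule periodic_imp_strongly_periodic_semiregular)
  moreover have
    "vcol_stab (carrier G) (cayley_adj G S) c \<subseteq> graph_aut (carrier G) (cayley_adj G S)"
    "ecol_stab (carrier G) (cayley_adj G S) c' \<subseteq> graph_aut (carrier G) (cayley_adj G S)"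
    "orient_stab (carrier G) (cayley_adj G S) Or \<subseteq> graph_aut (carrier G) (cayley_adj G S)"
    for c :: "'a \<Rightarrow> 'c" and c' :: "'a set \<Rightarrow> 'd" and Or
    unfolding vcol_stab_def ecol_stab_def orient_stab_def by blast+
  ultimately show ?thesis by blast
qed

end
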